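(* Let $\rho_n^{AB}$ be a state on $\mathcal{H}_A^{(n)}\otimes\mathcal{H}_B^{(n)}$ with $\dim\mathcal{H}_A^{(n)}=d^n$, and let $\rho_n^B$ be its reduced state on $B$. Let $\mathcal{E}^A_{n,1},\dots,\mathcal{E}^A_{n,M}$ be CPTP maps on $\mathcal{B}(\mathcal{H}_A^{(n)})$, let $\rho^{AB}_{n,i}=(\mathcal{E}^A_{n,i}\otimes\mathrm{id}^B)\rho_n^{AB}$, and let $E^{AB}_{n,1},\dots,E^{AB}_{n,M}\ge0$ with $\sum_iE^{AB}_{n,i}\le I$. Then for every real $\gamma$, the average error probability $P_e=\frac1M\sum_{i=1}^M(1-\mathrm{Tr}(\rho^{AB}_{n,i}E^{AB}_{n,i}))$ satisfies \[ P_e\ge 1-\max_i\mathrm{Tr}\Big[\{\rho^{AB}_{n,i}\ge e^{-n\gamma}I^A_n\otimes\rho^B_n\}\big(\rho^{AB}_{n,i}-e^{-n\gamma}I^A_n\otimes\rho^B_n\big)\Big]-\frac{e^{n(\log d-\gamma)}}{M}. \]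
   Context: Logarithms are natural. For self-adjoint $A=\sum_i\lambda_i|i\rangle\langle i|$, $\{A\ge0\}:=\sum_{\lambda_i\ge0}|i\rangle\langle i|$ and $\{A\ge B\}:=\{A-B\ge0\}$. $I^A_n$ denotes the identity on $\mathcal{H}_A^{(n)}$. *)

theory Defs
  imports "HOL-Analysis.Analysis"
begin

text \<open>Finite-dimensional quantum operators: complex square matrices indexed by a finite type.
  The bipartite system A B has index type 'a \<times> 'b.\<close>

type_synonym 'n cmat = "complex^'n^'n"

definition cinner :: "complex^'n::finite \<Rightarrow> complex^'n \<Rightarrow> complex" where
  "cinner v w = (\<Sum>i\<in>UNIV. cnj (v$i) * w$i)"

definition mtrace :: "'n::finite cmat \<Rightarrow> complex" where
  "mtrace A = (\<Sum>i\<in>UNIV. A$i$i)"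

definition adjoint_mat :: "'n::finite cmat \<Rightarrow> 'n cmat" where
  "adjoint_mat A = (\<chi> i j. cnj (A$j$i))"

definition cscale :: "complex \<Rightarrow> 'n::finite cmat \<Rightarrow> 'n cmat" where
  "cscale c A = (\<chi> i j. c * A$i$j)"

definition hermitian :: "'n::finite cmat \<Rightarrow> bool" where
  "hermitian A \<longleftrightarrow> adjoint_mat A = A"

definition psd :: "'n::finite cmat \<Rightarrow> bool" where
  "psd A \<longleftrightarrow> hermitian A \<and> (\<forall>v. 0 \<le> Re (cinner v (A *v v)))"

definition op_le :: "'n::finite cmat \<Rightarrow> 'n::finite cmat \<Rightarrow> bool" where
  "op_le A B \<longleftrightarrow> psd (B - A)"

definition density :: "'n::finite cmat \<Rightarrow> bool" where
  "density A \<longleftrightarrow> psd A \<and> mtrace A = 1"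

definition unitary_mat :: "'n::finite cmat \<Rightarrow> bool" where
  "unitary_mat U \<longleftrightarrow> adjoint_mat U ** U = mat 1"

definition diag_real :: "('n::finite \<Rightarrow> real) \<Rightarrow> 'n::finite cmat" where
  "diag_real lam = (\<chi> i j. if i = j then complex_of_real (lam i) else 0)"

text \<open>Spectral projection {A \<ge> 0}: for a spectral decomposition A = U diag(lam) U*,
  the projection U diag(1[lam_i \<ge> 0]) U*. (Independent of the chosen decomposition
  for Hermitian A.)\<close>
definition nonneg_proj :: "'n::finite cmat \<Rightarrow> 'n::finite cmat" where
  "nonneg_proj A = (SOME P. \<exists>U lam. unitary_mat U \<and>
       A = U ** diag_real lam ** adjoint_mat U \<and>
       P = U ** diag_real (\<lambda>i. if lam i \<ge> 0 then 1 else 0) ** adjoint_mat U)"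

definition kron :: "'a::finite cmat \<Rightarrow> 'b::finite cmat \<Rightarrow> ('a \<times> 'b) cmat" where
  "kron A B = (\<chi> p q. A$(fst p)$(fst q) * B$(snd p)$(snd q))"

definition ptrace_A :: "('a::finite \<times> 'b::finite) cmat \<Rightarrow> 'b cmat" where
  "ptrace_A R = (\<chi> b b'. \<Sum>a\<in>UNIV. R$(a,b)$(a,b'))"

text \<open>(E \<otimes> id^B) applied to a bipartite operator, for linear E on B(H_A).\<close>
definition apply_left :: "('a::finite cmat \<Rightarrow> 'a cmat) \<Rightarrow> ('a \<times> 'b::finite) cmat \<Rightarrow> ('a \<times> 'b) cmat" where
  "apply_left E R = (\<chi> p q. E (\<chi> x y. R$(x, snd p)$(y, snd q)) $ (fst p) $ (fst q))"

text \<open>Positivity of a k\<times>k block operator with blocks X i j (i.e. an operator on H \<otimes> C^k).\<close>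
definition block_psd :: "nat \<Rightarrow> (nat \<Rightarrow> nat \<Rightarrow> 'n::finite cmat) \<Rightarrow> bool" where
  "block_psd k X \<longleftrightarrow> (\<forall>i<k. \<forall>j<k. X i j = adjoint_mat (X j i)) \<and>
     (\<forall>v :: nat \<Rightarrow> complex^'n. 0 \<le> Re (\<Sum>i<k. \<Sum>j<k. cinner (v i) (X i j *v v j)))"

definition complex_linear_map :: "('n::finite cmat \<Rightarrow> 'm::finite cmat) \<Rightarrow> bool" where
  "complex_linear_map E \<longleftrightarrow> (\<forall>X Y. E (X + Y) = E X + E Y) \<and> (\<forall>c X. E (cscale c X) = cscale c (E X))"

text \<open>Complete positivity: E \<otimes> id_k is positive for every ancilla dimension k.\<close>
definition completely_positive :: "('n::finite cmat \<Rightarrow> 'm::finite cmat) \<Rightarrow> bool" where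
  "completely_positive E \<longleftrightarrow> (\<forall>k X. block_psd k X \<longrightarrow> block_psd k (\<lambda>i j. E (X i j)))"

definition trace_preserving :: "('n::finite cmat \<Rightarrow> 'm::finite cmat) \<Rightarrow> bool" where
  "trace_preserving E \<longleftrightarrow> (\<forall>X. mtrace (E X) = mtrace X)"

definition cptp :: "('n::finite cmat \<Rightarrow> 'm::finite cmat) \<Rightarrow> bool" where
  "cptp E \<longleftrightarrow> complex_linear_map E \<and> completely_positive E \<and> trace_preserving E"

end

theory Submission
  imports Defs
begin

text \<open>Put c = exp(-n gamma) and sigma = I \<otimes> rho_B. For each i,
  tr(rho_i E_i) = tr((rho_i - c sigma) E_i) + c tr(sigma E_i). As 0 \<le> E_i \<le> I, the first term is
  at most tr({rho_i \<ge> c sigma}(rho_i - c sigma)), and since the E_i sum to at most I, the second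
  terms add up to at most c tr(sigma) = c d^n. Averaging over the M messages gives the bound.
  Diagonalising rho_i - c sigma needs the spectral theorem for Hermitian matrices, which is
  proved variationally: a maximiser of the Rayleigh quotient on an invariant subspace is an
  eigenvector.\<close>

lemma cinner_add_right: "cinner v (w + z) = cinner v w + cinner v z"
  by (simp add: cinner_def algebra_simps sum.distrib)

lemma cinner_add_left: "cinner (w + z) v = cinner w v + cinner z v"
  by (simp add: cinner_def algebra_simps sum.distrib)

lemma cinner_diff_right: "cinner v (w - z) = cinner v w - cinner v z"
  by (simp add: cinner_def algebra_simps sum_subtractf)

lemma cinner_scale_right: "cinner v (c *s w) = c * cinner v w"
  by (simp add: cinner_def algebra_simps sum_distrib_left)

lemma cinner_scaleR_right: "cinner v (r *\<^sub>R w) = complex_of_real r * cinner v w"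
  by (simp add: cinner_def sum_distrib_left scaleR_conv_of_real[where 'a=complex] algebra_simps)

lemma cinner_scaleR_left: "cinner (r *\<^sub>R v) w = complex_of_real r * cinner v w"
  by (simp add: cinner_def sum_distrib_left scaleR_conv_of_real[where 'a=complex] algebra_simps)

lemma cinner_sum_right: "cinner v (sum f S) = (\<Sum>j\<in>S. cinner v (f j))"
  by (induct S rule: infinite_finite_induct) (simp_all add: cinner_add_right cinner_def[of v 0])

lemma cinner_commute: "cinner w v = cnj (cinner v w)"
  by (simp add: cinner_def mult.commute)

lemma Re_cinner: "Re (cinner v w) = inner v w"
  by (simp add: cinner_def inner_vec_def Re_sum inner_complex_def)

lemma cinner_self: "cinner v v = complex_of_real (norm v ^ 2)"
proof -
  have "Im (cinner v v) = 0"
    by (simp add: cinner_def Im_sum)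
  moreover have "Re (cinner v v) = norm v ^ 2"
    by (simp add: Re_cinner power2_norm_eq_inner)
  ultimately show ?thesis by (simp add: complex_eq_iff)
qed

lemma cinner_quadratic_form:
  "cinner v (A *v v) = (\<Sum>p\<in>UNIV. \<Sum>q\<in>UNIV. cnj (v $ p) * A $ p $ q * v $ q)"
  by (simp add: cinner_def matrix_vector_mult_def sum_distrib_left mult.assoc)

lemma matrix_vector_mult_scaleR: "(A::'n::finite cmat) *v (r *\<^sub>R x) = r *\<^sub>R (A *v x)"
  by (simp add: vec_eq_iff matrix_vector_mult_def scaleR_conv_of_real[where 'a=complex]
      sum_distrib_left mult.left_commute)

lemma vector_smult_Re_Im: "(c::complex) *s x = Re c *\<^sub>R x + Im c *\<^sub>R (\<i> *s x)"
proof -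
  have "c * y = complex_of_real (Re c) * y + complex_of_real (Im c) * (\<i> * y)" for y
    by (simp add: complex_eq_iff algebra_simps)
  then show ?thesis
    by (simp add: vec_eq_iff scaleR_conv_of_real[where 'a=complex])
qed

section \<open>Hermitian matrices and the spectral theorem\<close>

lemma hermitian_entry: "hermitian A \<Longrightarrow> cnj (A $ j $ i) = A $ i $ j"
  unfolding hermitian_def adjoint_mat_def by (metis vec_lambda_beta)

lemma hermitianI: "(\<And>i j. cnj (A $ j $ i) = A $ i $ j) \<Longrightarrow> hermitian A"
  unfolding hermitian_def adjoint_mat_def by (simp add: vec_eq_iff)

lemma hermitian_cinner:
  assumes "hermitian A"
  shows "cinner v (A *v w) = cinner (A *v v) w"
proof -
  have "cinner v (A *v w) = (\<Sum>i\<in>UNIV. \<Sum>j\<in>UNIV. cnj (v$i) * A$i$j * w$j)"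
    by (simp add: cinner_def matrix_vector_mult_def sum_distrib_left mult.assoc)
  also have "\<dots> = (\<Sum>j\<in>UNIV. \<Sum>i\<in>UNIV. cnj (v$i) * A$i$j * w$j)"
    by (rule sum.swap)
  also have "\<dots> = (\<Sum>j\<in>UNIV. \<Sum>i\<in>UNIV. cnj (A$j$i * v$i) * w$j)"
    by (simp add: hermitian_entry[OF assms] mult.commute mult.left_commute)
  also have "\<dots> = cinner (A *v v) w"
    by (simp add: cinner_def matrix_vector_mult_def sum_distrib_right)
  finally show ?thesis .
qed

lemma hermitian_cinner_real:
  assumes "hermitian A"
  shows "cinner v (A *v v) = complex_of_real (Re (cinner v (A *v v)))"
proof -
  have "cinner v (A *v v) = cnj (cinner v (A *v v))"
    using hermitian_cinner[OF assms, of v v] cinner_commute[of "A *v v" v] by simp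
  then show ?thesis
    by (metis Reals_cnj_iff complex_is_Real_iff complex_eq_iff of_real_Re)
qed

lemma hermitian_diff_cscale:
  assumes "hermitian A" "hermitian B"
  shows "hermitian (A - cscale (complex_of_real c) B)"
  using hermitian_entry[OF assms(1)] hermitian_entry[OF assms(2)]
  by (intro hermitianI) (simp add: cscale_def)

lemma nonneg_quadratic_bound_eq_0:
  fixes s C :: real
  assumes "0 \<le> s" and bound: "\<And>t. 2 * t * s \<le> t\<^sup>2 * C"
  shows "s = 0"
proof (rule ccontr)
  assume "s \<noteq> 0"
  with assms(1) have s: "s > 0" by simp
  define t where "t = s / (\<bar>C\<bar> + 1)"
  have t: "t > 0" using s by (simp add: t_def)
  have "2 * s \<le> t * C" using bound[of t] t by (simp add: power2_eq_square)
  also have "t * C \<le> t * \<bar>C\<bar>" using t by (simp add: mult_left_mono)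
  also have "t * \<bar>C\<bar> < s" using s by (simp add: t_def field_simps)
  finally show False using s by simp
qed

text \<open>The first variation of the Rayleigh quotient at v in the direction z = A v - l v is
  twice the squared norm of z, so maximality forces z = 0.\<close>
lemma hermitian_rayleigh_maximiser_eigenvector:
  fixes A :: "'n::finite cmat"
  assumes herm: "hermitian A" and T: "subspace T"
    and inv: "\<And>w. w \<in> T \<Longrightarrow> A *v w \<in> T"
    and vT: "v \<in> T" and nv: "norm v = 1"
    and max: "\<And>w. w \<in> T \<Longrightarrow> Re (cinner w (A *v w)) \<le> Re (cinner v (A *v v)) * norm w ^ 2"
  shows "A *v v = Re (cinner v (A *v v)) *\<^sub>R v"
proof -
  define l where "l = Re (cinner v (A *v v))"
  have cvv: "cinner v v = 1" using nv by (simp add: cinner_self)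
  have cvAv: "cinner v (A *v v) = complex_of_real l"
    using hermitian_cinner_real[OF herm, of v] by (simp add: l_def)
  define z where "z = A *v v - l *\<^sub>R v"
  have zT: "z \<in> T" unfolding z_def by (intro subspace_diff subspace_scale T inv vT)
  have cvz: "cinner v z = 0"
    by (simp add: z_def cinner_diff_right cinner_scaleR_right cvAv cvv)
  have czv: "cinner z v = 0" using cvz cinner_commute[of z v] by simp
  define s where "s = norm z ^ 2"
  have czz: "cinner z z = complex_of_real s" by (simp add: s_def cinner_self)
  have czAv: "cinner z (A *v v) = complex_of_real s"
  proof -
    have "A *v v = z + l *\<^sub>R v" by (simp add: z_def)
    then show ?thesis by (simp add: cinner_add_right cinner_scaleR_right czz czv)
  qed
  have cvAz: "cinner v (A *v z) = complex_of_real s"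
    using hermitian_cinner[OF herm, of v z] cinner_commute[of "A *v v" z] czAv by simp
  define b where "b = Re (cinner z (A *v z))"
  have "2 * t * s \<le> t\<^sup>2 * (l * s - b)" for t :: real
  proof -
    define w where "w = v + t *\<^sub>R z"
    have "w \<in> T" unfolding w_def by (intro subspace_add subspace_scale T vT zT)
    then have "Re (cinner w (A *v w)) \<le> l * norm w ^ 2" using max by (simp add: l_def)
    moreover have "Re (cinner w (A *v w)) = l + 2 * t * s + t\<^sup>2 * b"
      by (simp add: w_def matrix_vector_mult_scaleR matrix_vector_right_distrib cinner_add_left
          cinner_add_right cinner_scaleR_left cinner_scaleR_right cvAv cvAz czAv b_def
          power2_eq_square algebra_simps)
    moreover have "norm w ^ 2 = 1 + t\<^sup>2 * s"
    proof -
      have "complex_of_real (norm w ^ 2) = cinner w w" by (simp add: cinner_self)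
      also have "\<dots> = complex_of_real (1 + t\<^sup>2 * s)"
        by (simp add: w_def cinner_add_left cinner_add_right cinner_scaleR_left
            cinner_scaleR_right cvv cvz czv czz power2_eq_square)
      finally show ?thesis by (simp only: of_real_eq_iff)
    qed
    ultimately show ?thesis by (simp add: algebra_simps)
  qed
  then have "s = 0" by (intro nonneg_quadratic_bound_eq_0) (simp_all add: s_def)
  then show ?thesis by (simp add: s_def z_def l_def)
qed

lemma hermitian_eigenvector_in_invariant_subspace:
  fixes A :: "'n::finite cmat"
  assumes herm: "hermitian A" and T: "subspace T"
    and inv: "\<And>w. w \<in> T \<Longrightarrow> A *v w \<in> T"
    and v0: "v0 \<in> T" "v0 \<noteq> 0"
  shows "\<exists>v (l::real). v \<in> T \<and> norm v = 1 \<and> A *v v = l *\<^sub>R v"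
proof -
  define K where "K = T \<inter> sphere 0 1"
  have "compact K" unfolding K_def
    by (intro closed_Int_compact closed_subspace T compact_sphere)
  moreover have "(1 / norm v0) *\<^sub>R v0 \<in> K"
    using v0 by (simp add: K_def subspace_scale[OF T])
  then have "K \<noteq> {}" by blast
  moreover have "continuous_on K (\<lambda>w. inner w (A *v w))"
    by (intro continuous_intros matrix_vector_mult_linear_continuous_on)
  ultimately obtain v where vK: "v \<in> K"
    and vmax: "\<And>w. w \<in> K \<Longrightarrow> inner w (A *v w) \<le> inner v (A *v v)"
    using continuous_attains_sup by metis
  have "Re (cinner w (A *v w)) \<le> Re (cinner v (A *v v)) * norm w ^ 2" if w: "w \<in> T" for w
  proof (cases "w = 0")
    case False
    have "(1 / norm w) *\<^sub>R w \<in> K" using False w by (simp add: K_def subspace_scale[OF T])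
    from vmax[OF this] False show ?thesis
      by (simp add: Re_cinner matrix_vector_mult_scaleR power2_eq_square field_simps)
  qed (simp add: Re_cinner)
  with vK show ?thesis
    using hermitian_rayleigh_maximiser_eigenvector[OF herm T inv] by (auto simp: K_def)
qed

definition orthonormal_family :: "nat \<Rightarrow> (nat \<Rightarrow> complex^'n::finite) \<Rightarrow> bool" where
  "orthonormal_family k u \<longleftrightarrow> (\<forall>i<k. \<forall>j<k. cinner (u i) (u j) = (if i = j then 1 else 0))"

text \<open>Otherwise every vector equals its expansion along the u j, so the 2 k vectors u j and
  i u j span the complex space, whose real dimension is 2 CARD('n).\<close>
lemma orthonormal_family_has_orthogonal_vector:
  fixes u :: "nat \<Rightarrow> complex^'n::finite"
  assumes orth: "orthonormal_family k u" and k: "k < CARD('n)"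
  shows "\<exists>v. v \<noteq> 0 \<and> (\<forall>j<k. cinner (u j) v = 0)"
proof (rule ccontr)
  assume no_perp: "\<not> ?thesis"
  define B where "B = u ` {..<k} \<union> (\<lambda>j. \<i> *s u j) ` {..<k}"
  have "x \<in> span B" for x
  proof -
    define w where "w = x - (\<Sum>j<k. cinner (u j) x *s u j)"
    have "cinner (u i) w = 0" if "i < k" for i
    proof -
      have "cinner (u i) (\<Sum>j<k. cinner (u j) x *s u j) =
          (\<Sum>j<k. cinner (u j) x * (if i = j then 1 else 0))"
        using that orth by (simp add: orthonormal_family_def cinner_sum_right cinner_scale_right)
      also have "\<dots> = cinner (u i) x" using that by (simp add: if_distrib cong: if_cong)
      finally show ?thesis by (simp add: w_def cinner_diff_right)
    qed
    then have "w = 0" using no_perp by blast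
    then have "x = (\<Sum>j<k. cinner (u j) x *s u j)" by (simp add: w_def)
    also have "\<dots> \<in> span B"
    proof (rule span_sum)
      fix j assume "j \<in> {..<k}"
      then have "u j \<in> span B" "\<i> *s u j \<in> span B" by (auto simp: B_def intro: span_base)
      then show "cinner (u j) x *s u j \<in> span B"
        by (subst vector_smult_Re_Im) (intro span_add span_scale)
    qed
    finally show ?thesis .
  qed
  then have "dim (UNIV :: (complex^'n) set) \<le> card B"
    by (intro dim_le_card) (auto simp: B_def)
  also have "card B \<le> k + k"
    unfolding B_def
    by (intro card_Un_le[THEN order_trans] add_mono card_image_le[THEN order_trans]) auto
  finally show False using k by (simp add: dim_UNIV DIM_cart)
qed

lemma hermitian_orthonormal_eigenvectors:
  fixes A :: "'n::finite cmat"
  assumes herm: "hermitian A" and "k \<le> CARD('n)"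
  shows "\<exists>u lam. orthonormal_family k u \<and> (\<forall>j<k. A *v u j = (lam j :: real) *\<^sub>R u j)"
  using assms(2)
proof (induction k)
  case (Suc k)
  then obtain u lam where orth: "orthonormal_family k u"
    and eig: "\<forall>j<k. A *v u j = (lam j :: real) *\<^sub>R u j" by auto
  define T where "T = {v. \<forall>j<k. cinner (u j) v = 0}"
  have T: "subspace T"
    by (auto simp: T_def subspace_def cinner_add_right cinner_scaleR_right cinner_def[of _ 0])
  have inv: "A *v v \<in> T" if "v \<in> T" for v
  proof -
    have "cinner (u j) (A *v v) = 0" if "j < k" for j
      using \<open>v \<in> T\<close> that eig by (simp add: T_def hermitian_cinner[OF herm] cinner_scaleR_left)
    then show ?thesis by (simp add: T_def)
  qed
  obtain v0 where "v0 \<in> T" "v0 \<noteq> 0"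
    using orthonormal_family_has_orthogonal_vector[OF orth] Suc.prems by (auto simp: T_def)
  then obtain v l where v: "v \<in> T" "norm v = 1" "A *v v = l *\<^sub>R v"
    using hermitian_eigenvector_in_invariant_subspace[OF herm T inv] by blast
  have "cinner v v = 1" using v(2) by (simp add: cinner_self)
  moreover have "cinner v (u j) = 0" if "j < k" for j
    using v(1) that cinner_commute[of v "u j"] by (simp add: T_def)
  ultimately have "orthonormal_family (Suc k) (u(k := v))"
    using orth v(1) by (auto simp: orthonormal_family_def T_def less_Suc_eq)
  moreover have "\<forall>j<Suc k. A *v (u(k := v)) j = (lam(k := l)) j *\<^sub>R (u(k := v)) j"
    using eig v(3) by (auto simp: less_Suc_eq)
  ultimately show ?case by blast
qed (simp add: orthonormal_family_def)

theorem hermitian_spectral_decomposition: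
  fixes A :: "'n::finite cmat"
  assumes herm: "hermitian A"
  shows "\<exists>U lam. unitary_mat U \<and> A = U ** diag_real lam ** adjoint_mat U"
proof -
  obtain u lam where orth: "orthonormal_family CARD('n) u"
    and eig: "\<forall>j<CARD('n). A *v u j = (lam j :: real) *\<^sub>R u j"
    using hermitian_orthonormal_eigenvectors[OF herm, of "CARD('n)"] by auto
  obtain g where g: "bij_betw g (UNIV::'n set) {0..<CARD('n)}"
    using ex_bij_betw_finite_nat[of "UNIV::'n set"] by auto
  have g_less: "g c < CARD('n)" for c using g by (auto simp: bij_betw_def)
  have g_eq: "g c = g c' \<longleftrightarrow> c = c'" for c c' using g by (auto simp: bij_betw_def inj_on_def)
  define U :: "'n cmat" where "U = (\<chi> r c. u (g c) $ r)"
  define D :: "'n cmat" where "D = diag_real (\<lambda>c. lam (g c))"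
  have "(adjoint_mat U ** U) $ c $ c' = cinner (u (g c)) (u (g c'))" for c c'
    by (simp add: adjoint_mat_def matrix_matrix_mult_def U_def cinner_def)
  then have UU: "adjoint_mat U ** U = mat 1"
    using orth g_less g_eq by (simp add: orthonormal_family_def vec_eq_iff mat_def)
  have AU: "A ** U = U ** D"
  proof -
    have "(A ** U) $ r $ c = (A *v u (g c)) $ r" for r c
      by (simp add: matrix_matrix_mult_def matrix_vector_mult_def U_def)
    moreover have "(U ** D) $ r $ c = (lam (g c) *\<^sub>R u (g c)) $ r" for r c
    proof -
      have "(U ** D) $ r $ c =
          (\<Sum>k\<in>UNIV. u (g k) $ r * (if k = c then complex_of_real (lam (g k)) else 0))"
        by (simp add: matrix_matrix_mult_def U_def D_def diag_real_def)
      also have "\<dots> = u (g c) $ r * complex_of_real (lam (g c))"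
        by (simp add: if_distrib cong: if_cong)
      finally show ?thesis by (simp add: scaleR_conv_of_real[where 'a=complex] mult.commute)
    qed
    ultimately show ?thesis using eig g_less by (simp add: vec_eq_iff)
  qed
  have "A = A ** (U ** adjoint_mat U)"
    using UU by (simp add: matrix_left_right_inverse)
  also have "\<dots> = U ** D ** adjoint_mat U" by (simp add: matrix_mul_assoc AU)
  finally show ?thesis using UU unfolding unitary_mat_def D_def by blast
qed

section \<open>Trace\<close>

lemma mtrace_diff: "mtrace (A - B) = mtrace A - mtrace B"
  by (simp add: mtrace_def sum_subtractf)

lemma mtrace_cscale: "mtrace (cscale c A) = c * mtrace A"
  by (simp add: mtrace_def cscale_def sum_distrib_left)

lemma mtrace_sum: "mtrace (sum f S) = (\<Sum>i\<in>S. mtrace (f i))"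
proof -
  have "mtrace (sum f S) = (\<Sum>k\<in>UNIV. \<Sum>i\<in>S. f i $ k $ k)"
    by (simp add: mtrace_def sum_component)
  also have "\<dots> = (\<Sum>i\<in>S. \<Sum>k\<in>UNIV. f i $ k $ k)" by (rule sum.swap)
  finally show ?thesis by (simp add: mtrace_def)
qed

lemma mtrace_mult_commute: "mtrace ((A::'n::finite cmat) ** B) = mtrace (B ** A)"
proof -
  have "mtrace (A ** B) = (\<Sum>i\<in>UNIV. \<Sum>k\<in>UNIV. A$i$k * B$k$i)"
    by (simp add: mtrace_def matrix_matrix_mult_def)
  also have "\<dots> = (\<Sum>k\<in>UNIV. \<Sum>i\<in>UNIV. A$i$k * B$k$i)" by (rule sum.swap)
  also have "\<dots> = mtrace (B ** A)"
    by (simp add: mtrace_def matrix_matrix_mult_def mult.commute)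
  finally show ?thesis .
qed

lemma matrix_diff_ldistrib: "(A::'n::finite cmat) ** (B - C) = A ** B - A ** C"
  by (simp add: vec_eq_iff matrix_matrix_mult_def algebra_simps sum_subtractf)

lemma matrix_diff_rdistrib: "((A::'n::finite cmat) - B) ** C = A ** C - B ** C"
  by (simp add: vec_eq_iff matrix_matrix_mult_def algebra_simps sum_subtractf)

lemma matrix_sum_ldistrib: "(A::'n::finite cmat) ** sum f S = (\<Sum>i\<in>S. A ** f i)"
  by (induct S rule: infinite_finite_induct) (auto simp: matrix_add_ldistrib)

lemma matrix_cscale_left: "cscale c (A::'n::finite cmat) ** B = cscale c (A ** B)"
  by (simp add: vec_eq_iff matrix_matrix_mult_def cscale_def sum_distrib_left mult.assoc)

lemma adjoint_mult_mult_diag_entry: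
  "(adjoint_mat U ** X ** U) $ j $ j = cinner (column j U) (X *v column j U)"
  by (simp add: adjoint_mat_def matrix_matrix_mult_def cinner_def matrix_vector_mult_def column_def
      sum_distrib_left sum_distrib_right mult.assoc)
    (rule sum.swap)

lemma unitary_column_quadratic_form:
  assumes "unitary_mat U"
  shows "cinner (column j U) ((U ** D ** adjoint_mat U) *v column j U) = D $ j $ j"
proof -
  have "adjoint_mat U ** (U ** D ** adjoint_mat U) ** U =
      (adjoint_mat U ** U) ** D ** (adjoint_mat U ** U)"
    by (simp add: matrix_mul_assoc)
  then show ?thesis
    using assms adjoint_mult_mult_diag_entry[of U "U ** D ** adjoint_mat U" j]
    by (simp add: unitary_mat_def)
qed

lemma unitary_column_cinner_self:
  assumes "unitary_mat U"
  shows "cinner (column j U) (column j U) = 1"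
proof -
  have "adjoint_mat U ** mat 1 ** U = mat 1"
    using assms by (simp add: unitary_mat_def)
  then have "(adjoint_mat U ** mat 1 ** U) $ j $ j = 1"
    by (simp add: mat_def)
  then show ?thesis by (simp only: adjoint_mult_mult_diag_entry matrix_vector_mul_lid)
qed

lemma mtrace_mult_spectral:
  "mtrace (X ** (U ** diag_real lam ** adjoint_mat U)) =
     (\<Sum>j\<in>UNIV. complex_of_real (lam j) * cinner (column j U) (X *v column j U))"
proof -
  have "mtrace (X ** (U ** diag_real lam ** adjoint_mat U)) =
      mtrace (adjoint_mat U ** X ** U ** diag_real lam)"
    by (metis matrix_mul_assoc mtrace_mult_commute)
  also have "\<dots> = (\<Sum>j\<in>UNIV. complex_of_real (lam j) * cinner (column j U) (X *v column j U))"
    by (simp add: mtrace_def matrix_matrix_mult_def diag_real_def if_distrib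
        adjoint_mult_mult_diag_entry[symmetric] mult.commute cong: if_cong)
  finally show ?thesis .
qed

section \<open>Positive semidefinite matrices\<close>

lemma psd_hermitian: "psd X \<Longrightarrow> hermitian X"
  by (simp add: psd_def)

lemma psd_cinner_nonneg: "psd X \<Longrightarrow> 0 \<le> Re (cinner v (X *v v))"
  by (simp add: psd_def)

lemma psd_add: "psd A \<Longrightarrow> psd B \<Longrightarrow> psd (A + B)"
  unfolding psd_def
  by (auto intro!: hermitianI simp: hermitian_entry matrix_vector_mult_add_rdistrib cinner_add_right)

lemma psd_zero: "psd (0 :: 'n::finite cmat)"
  unfolding psd_def by (auto intro!: hermitianI simp: cinner_def)

lemma psd_sum: "(\<And>i. i \<in> S \<Longrightarrow> psd (f i)) \<Longrightarrow> psd (sum f S)"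
  by (induct S rule: infinite_finite_induct) (auto simp: psd_zero psd_add)

lemma op_le_summand:
  assumes "finite S" and "i \<in> S" and "\<And>j. j \<in> S \<Longrightarrow> psd (E j)" and "op_le (sum E S) B"
  shows "op_le (E i) B"
proof -
  have "B - E i = (B - sum E S) + sum E (S - {i})"
    using assms(1,2) by (simp add: sum.remove algebra_simps)
  moreover have "psd (sum E (S - {i}))" using assms(3) by (intro psd_sum) auto
  ultimately show ?thesis using assms(4) unfolding op_le_def by (metis psd_add)
qed

lemma psd_mtrace_mult_nonneg:
  assumes A: "psd A" and B: "psd B"
  shows "0 \<le> Re (mtrace (A ** B))"
proof -
  obtain U lam where U: "unitary_mat U" and B_eq: "B = U ** diag_real lam ** adjoint_mat U"
    using hermitian_spectral_decomposition[OF psd_hermitian[OF B]] by blast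
  have "lam j = Re (cinner (column j U) (B *v column j U))" for j
    using unitary_column_quadratic_form[OF U, of j "diag_real lam"] by (simp add: B_eq diag_real_def)
  then have "0 \<le> lam j" for j using psd_cinner_nonneg[OF B] by simp
  then show ?thesis
    using psd_cinner_nonneg[OF A]
    by (simp add: B_eq mtrace_mult_spectral Re_sum sum_nonneg)
qed

lemma hermitian_nonneg_proj_spectral:
  assumes "hermitian R"
  obtains U lam where "unitary_mat U" and "R = U ** diag_real lam ** adjoint_mat U"
    and "nonneg_proj R = U ** diag_real (\<lambda>i. if lam i \<ge> 0 then 1 else 0) ** adjoint_mat U"
proof -
  have "\<exists>P. \<exists>U lam. unitary_mat U \<and> R = U ** diag_real lam ** adjoint_mat U \<and>
       P = U ** diag_real (\<lambda>i. if lam i \<ge> 0 then 1 else 0) ** adjoint_mat U"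
    using hermitian_spectral_decomposition[OF assms] by blast
  from someI_ex[OF this] have "\<exists>U lam. unitary_mat U \<and> R = U ** diag_real lam ** adjoint_mat U \<and>
       nonneg_proj R = U ** diag_real (\<lambda>i. if lam i \<ge> 0 then 1 else 0) ** adjoint_mat U"
    unfolding nonneg_proj_def .
  with that show ?thesis by blast
qed

text \<open>In an eigenbasis of R, tr(R E) is the sum of the eigenvalues of R weighted by the
  diagonal entries of E, which lie in [0, 1]; the sum is largest when exactly the nonnegative
  eigenvalues get weight 1, which is tr({R \<ge> 0} R).\<close>
lemma mtrace_mult_le_nonneg_proj:
  assumes R: "hermitian R" and E: "psd E" and E_le: "op_le E (mat 1)"
  shows "Re (mtrace (R ** E)) \<le> Re (mtrace (nonneg_proj R ** R))"
proof -
  obtain U lam where U: "unitary_mat U" and R_eq: "R = U ** diag_real lam ** adjoint_mat U"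
    and P_eq: "nonneg_proj R = U ** diag_real (\<lambda>i. if lam i \<ge> 0 then 1 else 0) ** adjoint_mat U"
    using hermitian_nonneg_proj_spectral[OF R] by blast
  define x where "x j = Re (cinner (column j U) (E *v column j U))" for j
  have "0 \<le> x j" for j using psd_cinner_nonneg[OF E] by (simp add: x_def)
  moreover have "x j \<le> 1" for j
    using psd_cinner_nonneg[of "mat 1 - E" "column j U"] E_le unitary_column_cinner_self[OF U, of j]
    by (simp add: x_def op_le_def matrix_vector_mult_diff_rdistrib cinner_diff_right)
  ultimately have weight: "lam j * x j \<le> lam j * (if lam j \<ge> 0 then 1 else 0)" for j
    by (cases "lam j \<ge> 0") (auto intro: mult_left_le mult_nonpos_nonneg)
  have "Re (mtrace (R ** E)) = (\<Sum>j\<in>UNIV. lam j * x j)"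
    by (subst mtrace_mult_commute) (simp add: R_eq mtrace_mult_spectral Re_sum x_def)
  also have "\<dots> \<le> (\<Sum>j\<in>UNIV. lam j * (if lam j \<ge> 0 then 1 else 0))"
    by (intro sum_mono weight)
  also have "\<dots> = Re (mtrace (nonneg_proj R ** R))"
  proof -
    have "cinner (column j U) (nonneg_proj R *v column j U) =
        complex_of_real (if lam j \<ge> 0 then 1 else 0)" for j
      using unitary_column_quadratic_form[OF U, of j "diag_real (\<lambda>i. if lam i \<ge> 0 then 1 else 0)"]
      by (simp add: P_eq diag_real_def)
    then show ?thesis
      using mtrace_mult_spectral[of "nonneg_proj R" U lam] by (simp add: R_eq[symmetric] Re_sum)
  qed
  finally show ?thesis .
qed

section \<open>Bipartite operators\<close>

lemma sum_UNIV_prod_swap: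
  fixes F :: "'a::finite \<times> 'b::finite \<Rightarrow> 'c::comm_monoid_add"
  shows "(\<Sum>p\<in>UNIV. F p) = (\<Sum>b\<in>UNIV. \<Sum>x\<in>UNIV. F (x, b))"
proof -
  have "(\<Sum>p\<in>UNIV. F p) = (\<Sum>x\<in>UNIV. \<Sum>b\<in>UNIV. F (x, b))"
    using sum.cartesian_product[of "\<lambda>x b. F (x, b)" UNIV UNIV] by (simp add: UNIV_Times_UNIV)
  also have "\<dots> = (\<Sum>b\<in>UNIV. \<Sum>x\<in>UNIV. F (x, b))" by (rule sum.swap)
  finally show ?thesis .
qed

lemma cinner_quadratic_form_prod:
  fixes A :: "('a::finite \<times> 'b::finite) cmat"
  shows "cinner v (A *v v) = (\<Sum>b\<in>UNIV. \<Sum>x\<in>UNIV. \<Sum>b'\<in>UNIV. \<Sum>y\<in>UNIV.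
          cnj (v $ (x, b)) * A $ (x, b) $ (y, b') * v $ (y, b'))"
  unfolding cinner_quadratic_form sum_UNIV_prod_swap[where F="\<lambda>p. \<Sum>q\<in>UNIV. _ p q"]
    sum_UNIV_prod_swap[where F="\<lambda>q. _ q"] ..

lemma mtrace_kron_mat1:
  "mtrace (kron (mat 1 :: 'a::finite cmat) (B :: 'b::finite cmat)) = of_nat CARD('a) * mtrace B"
  by (simp add: mtrace_def kron_def mat_def sum_UNIV_prod_swap sum_distrib_left)

lemma mtrace_ptrace_A: "mtrace (ptrace_A (rho :: ('a::finite \<times> 'b::finite) cmat)) = mtrace rho"
  by (simp add: mtrace_def ptrace_A_def sum_UNIV_prod_swap)

text \<open>The quadratic form of the partial trace at u is the sum over a of the quadratic forms of
  rho at the product vectors e_a \<otimes> u.\<close>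
lemma psd_ptrace_A:
  fixes rho :: "('a::finite \<times> 'b::finite) cmat"
  assumes rho: "psd rho"
  shows "psd (ptrace_A rho)"
proof -
  have herm: "hermitian (ptrace_A rho)"
    by (rule hermitianI) (simp add: ptrace_A_def hermitian_entry[OF psd_hermitian[OF rho]])
  have "0 \<le> Re (cinner u (ptrace_A rho *v u))" for u
  proof -
    define w :: "'a \<Rightarrow> complex^('a \<times> 'b)" where "w a = (\<chi> p. if fst p = a then u $ snd p else 0)" for a
    define Q where "Q a = (\<Sum>b\<in>UNIV. \<Sum>b'\<in>UNIV. cnj (u $ b) * rho $ (a, b) $ (a, b') * u $ b')" for a
    have "cinner (w a) (rho *v w a) = Q a" for a
    proof -
      have "cnj (w a $ (x, b)) * rho $ (x, b) $ (y, b') * w a $ (y, b') =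
          (if y = a then (if x = a then cnj (u $ b) * rho $ (a, b) $ (a, b') * u $ b' else 0) else 0)"
        for x y b b'
        by (simp add: w_def)
      then have "(\<Sum>b'\<in>UNIV. \<Sum>y\<in>UNIV. cnj (w a $ (x, b)) * rho $ (x, b) $ (y, b') * w a $ (y, b')) =
          (if x = a then (\<Sum>b'\<in>UNIV. cnj (u $ b) * rho $ (a, b) $ (a, b') * u $ b') else 0)" for x b
        by (cases "x = a") simp_all
      then show ?thesis by (simp add: cinner_quadratic_form_prod Q_def)
    qed
    moreover have "cinner u (ptrace_A rho *v u) = (\<Sum>a\<in>UNIV. Q a)"
    proof -
      have "cinner u (ptrace_A rho *v u) =
          (\<Sum>b\<in>UNIV. \<Sum>b'\<in>UNIV. \<Sum>a\<in>UNIV. cnj (u $ b) * rho $ (a, b) $ (a, b') * u $ b')"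
        by (simp add: cinner_quadratic_form ptrace_A_def sum_distrib_left sum_distrib_right)
      also have "\<dots> = (\<Sum>b\<in>UNIV. \<Sum>a\<in>UNIV. \<Sum>b'\<in>UNIV. cnj (u $ b) * rho $ (a, b) $ (a, b') * u $ b')"
        by (rule sum.cong[OF refl], rule sum.swap)
      also have "\<dots> = (\<Sum>a\<in>UNIV. Q a)"
        unfolding Q_def by (rule sum.swap)
      finally show ?thesis .
    qed
    ultimately have "Re (cinner u (ptrace_A rho *v u)) = (\<Sum>a\<in>UNIV. Re (cinner (w a) (rho *v w a)))"
      by (simp add: Re_sum)
    also have "\<dots> \<ge> 0" by (intro sum_nonneg psd_cinner_nonneg[OF rho])
    finally show ?thesis .
  qed
  with herm show ?thesis by (simp add: psd_def)
qed

lemma psd_kron_mat1: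
  assumes B: "psd (B :: 'b::finite cmat)"
  shows "psd (kron (mat 1 :: 'a::finite cmat) B)"
proof -
  have herm: "hermitian (kron (mat 1 :: 'a::finite cmat) B)"
    by (rule hermitianI) (simp add: kron_def mat_def hermitian_entry[OF psd_hermitian[OF B]])
  have "0 \<le> Re (cinner v (kron (mat 1 :: 'a::finite cmat) B *v v))" for v
  proof -
    define u where "u x = (\<chi> b. v $ (x, b))" for x
    have "cinner v (kron (mat 1 :: 'a::finite cmat) B *v v) =
        (\<Sum>b\<in>UNIV. \<Sum>x\<in>UNIV. \<Sum>b'\<in>UNIV. cnj (u x $ b) * B $ b $ b' * u x $ b')"
      by (simp add: cinner_quadratic_form_prod kron_def mat_def u_def if_distrib if_distribR cong: if_cong)
    also have "\<dots> = (\<Sum>x\<in>UNIV. \<Sum>b\<in>UNIV. \<Sum>b'\<in>UNIV. cnj (u x $ b) * B $ b $ b' * u x $ b')"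
      by (rule sum.swap)
    also have "\<dots> = (\<Sum>x\<in>UNIV. cinner (u x) (B *v u x))"
      by (simp add: cinner_quadratic_form)
    finally have "Re (cinner v (kron (mat 1 :: 'a::finite cmat) B *v v)) =
        (\<Sum>x\<in>UNIV. Re (cinner (u x) (B *v u x)))"
      by (simp add: Re_sum)
    also have "\<dots> \<ge> 0" by (intro sum_nonneg psd_cinner_nonneg[OF B])
    finally show ?thesis .
  qed
  with herm show ?thesis by (simp add: psd_def)
qed

lemma block_psd_of_psd:
  fixes rho :: "('a::finite \<times> 'b::finite) cmat"
  assumes rho: "psd rho" and h: "bij_betw h (UNIV :: 'b set) {..<K}"
  shows "block_psd K (\<lambda>i j. \<chi> x y. rho $ (x, inv_into UNIV h i) $ (y, inv_into UNIV h j))"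
    (is "block_psd K ?X")
  unfolding block_psd_def
proof (intro conjI allI impI)
  fix i j
  show "?X i j = adjoint_mat (?X j i)"
    by (simp add: adjoint_mat_def vec_eq_iff hermitian_entry[OF psd_hermitian[OF rho]])
next
  fix v :: "nat \<Rightarrow> complex^'a"
  have hh: "inv_into UNIV h (h b) = b" for b
    using h by (simp add: bij_betw_def)
  define w :: "complex^('a \<times> 'b)" where "w = (\<chi> p. v (h (snd p)) $ (fst p))"
  have "(\<Sum>i<K. \<Sum>j<K. cinner (v i) (?X i j *v v j)) =
      (\<Sum>b\<in>UNIV. \<Sum>b'\<in>UNIV. cinner (v (h b)) (?X (h b) (h b') *v v (h b')))"
    unfolding sum.reindex_bij_betw[OF h, symmetric] by (simp add: hh)
  also have "\<dots> = (\<Sum>b\<in>UNIV. \<Sum>b'\<in>UNIV. \<Sum>x\<in>UNIV. \<Sum>y\<in>UNIV.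
      cnj (v (h b) $ x) * rho $ (x, b) $ (y, b') * v (h b') $ y)"
    by (simp add: hh cinner_def matrix_vector_mult_def sum_distrib_left mult.assoc)
  also have "\<dots> = (\<Sum>b\<in>UNIV. \<Sum>x\<in>UNIV. \<Sum>b'\<in>UNIV. \<Sum>y\<in>UNIV.
      cnj (v (h b) $ x) * rho $ (x, b) $ (y, b') * v (h b') $ y)"
    by (rule sum.cong[OF refl], rule sum.swap)
  also have "\<dots> = cinner w (rho *v w)"
    by (simp add: cinner_quadratic_form_prod w_def)
  finally show "0 \<le> Re (\<Sum>i<K. \<Sum>j<K. cinner (v i) (?X i j *v v j))"
    using psd_cinner_nonneg[OF rho] by simp
qed

text \<open>The blocks of (Ch \<otimes> id) rho are Ch applied to the blocks of rho, so complete positivity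
  makes them a Hermitian block matrix.\<close>
lemma hermitian_apply_left:
  fixes rho :: "('a::finite \<times> 'b::finite) cmat"
  assumes rho: "psd rho" and cp: "completely_positive Ch"
  shows "hermitian (apply_left Ch rho)"
proof -
  obtain h where h: "bij_betw h (UNIV :: 'b set) {..<CARD('b)}"
    using ex_bij_betw_finite_nat[of "UNIV :: 'b set"] by (auto simp: atLeast0LessThan)
  define X where "X = (\<lambda>i j. \<chi> x y. rho $ (x, inv_into UNIV h i) $ (y, inv_into UNIV h j))"
  have "block_psd CARD('b) X"
    unfolding X_def by (rule block_psd_of_psd[OF rho h])
  with cp have "block_psd CARD('b) (\<lambda>i j. Ch (X i j))"
    by (simp add: completely_positive_def)
  then have sym: "\<forall>i<CARD('b). \<forall>j<CARD('b). Ch (X i j) = adjoint_mat (Ch (X j i))"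
    unfolding block_psd_def by (rule conjunct1)
  have "h b < CARD('b)" and "inv_into UNIV h (h b) = b" for b
    using h by (auto simp: bij_betw_def)
  with sym have Ch_sym: "Ch (X (h b) (h b')) = adjoint_mat (Ch (X (h b') (h b)))" for b b'
    by blast
  have entry: "apply_left Ch rho $ p $ q = Ch (X (h (snd p)) (h (snd q))) $ fst p $ fst q" for p q
    by (simp add: apply_left_def X_def \<open>\<And>b. inv_into UNIV h (h b) = b\<close>)
  show ?thesis
  proof (rule hermitianI)
    fix p q
    show "cnj (apply_left Ch rho $ q $ p) = apply_left Ch rho $ p $ q"
      unfolding entry Ch_sym[of "snd p" "snd q"] by (simp add: adjoint_mat_def)
  qed
qed

section \<open>The converse bound\<close>

lemma sum_mtrace_mult_le_nonneg_proj:
  fixes Rho :: "'i \<Rightarrow> 'n::finite cmat"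
  assumes S: "finite S" and Rho: "\<And>i. i \<in> S \<Longrightarrow> hermitian (Rho i)"
    and \<sigma>: "psd \<sigma>" and c: "0 \<le> c"
    and E: "\<And>i. i \<in> S \<Longrightarrow> psd (E i)" and E_le: "op_le (sum E S) (mat 1)"
  shows "(\<Sum>i\<in>S. Re (mtrace (Rho i ** E i)))
    \<le> (\<Sum>i\<in>S. let R = Rho i - cscale (complex_of_real c) \<sigma> in Re (mtrace (nonneg_proj R ** R)))
       + c * Re (mtrace \<sigma>)"
proof -
  define f where "f i = (let R = Rho i - cscale (complex_of_real c) \<sigma> in Re (mtrace (nonneg_proj R ** R)))"
    for i
  have "Re (mtrace (Rho i ** E i)) \<le> f i + c * Re (mtrace (\<sigma> ** E i))" if i: "i \<in> S" for i
  proof -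
    define R where "R = Rho i - cscale (complex_of_real c) \<sigma>"
    have "hermitian R"
      unfolding R_def using Rho[OF i] psd_hermitian[OF \<sigma>] by (rule hermitian_diff_cscale)
    moreover have "op_le (E i) (mat 1)"
      using S i E E_le by (rule op_le_summand)
    ultimately have "Re (mtrace (R ** E i)) \<le> f i"
      unfolding f_def R_def[symmetric] Let_def using E[OF i] by (intro mtrace_mult_le_nonneg_proj)
    moreover have "mtrace (Rho i ** E i) = mtrace (R ** E i) + complex_of_real c * mtrace (\<sigma> ** E i)"
      by (simp add: R_def matrix_diff_rdistrib matrix_cscale_left mtrace_diff mtrace_cscale)
    ultimately show ?thesis by simp
  qed
  then have "(\<Sum>i\<in>S. Re (mtrace (Rho i ** E i))) \<le> (\<Sum>i\<in>S. f i + c * Re (mtrace (\<sigma> ** E i)))"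
    by (rule sum_mono)
  also have "\<dots> = sum f S + c * Re (mtrace (\<sigma> ** sum E S))"
    by (simp add: sum.distrib sum_distrib_left matrix_sum_ldistrib mtrace_sum Re_sum)
  also have "Re (mtrace (\<sigma> ** sum E S)) \<le> Re (mtrace \<sigma>)"
  proof -
    have "0 \<le> Re (mtrace (\<sigma> ** (mat 1 - sum E S)))"
      using E_le by (intro psd_mtrace_mult_nonneg \<sigma>) (simp add: op_le_def)
    then show ?thesis by (simp add: matrix_diff_ldistrib mtrace_diff)
  qed
  finally show ?thesis
    using c by (simp add: f_def mult_left_mono)
qed

lemma exp_neg_mult_mult_pow:
  fixes d n :: nat
  assumes "0 < d ^ n"
  shows "exp (- real n * \<gamma>) * real d ^ n = exp (real n * (ln (real d) - \<gamma>))"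
proof (cases "n = 0")
  case False
  with assms have "real d ^ n = exp (real n * ln (real d))"
    by (simp add: exp_of_nat_mult)
  then show ?thesis by (simp only: mult_exp_exp) (simp add: algebra_simps)
qed simp

theorem mainTheorem8:
  fixes d n M :: nat
    and rho :: "('a::finite \<times> 'b::finite) cmat"
    and Ch :: "nat \<Rightarrow> 'a cmat \<Rightarrow> 'a cmat"
    and Eop :: "nat \<Rightarrow> ('a \<times> 'b) cmat"
    and \<gamma> :: real
  assumes "CARD('a) = d ^ n"
    and "density rho"
    and "M \<ge> 1"
    and "\<forall>i\<in>{1..M}. cptp (Ch i)"
    and "\<forall>i\<in>{1..M}. psd (Eop i)"
    and "op_le (\<Sum>i=1..M. Eop i) (mat 1)"
  shows "(1 / real M) * (\<Sum>i=1..M. 1 - Re (mtrace (apply_left (Ch i) rho ** Eop i)))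
     \<ge> 1 - Max ((\<lambda>i. let R = apply_left (Ch i) rho - cscale (complex_of_real (exp (- real n * \<gamma>))) (kron (mat 1) (ptrace_A rho))
                     in Re (mtrace (nonneg_proj R ** R))) ` {1..M})
       - exp (real n * (ln (real d) - \<gamma>)) / real M"
proof -
  have M: "real M > 0" using assms(3) by simp
  have rho: "psd rho" "mtrace rho = 1" using assms(2) by (auto simp: density_def)
  define c where "c = exp (- real n * \<gamma>)"
  define \<sigma> :: "('a \<times> 'b) cmat" where "\<sigma> = kron (mat 1) (ptrace_A rho)"
  define f where "f i = (let R = apply_left (Ch i) rho - cscale (complex_of_real c) \<sigma>
                        in Re (mtrace (nonneg_proj R ** R)))" for i
  define success where "success i = Re (mtrace (apply_left (Ch i) rho ** Eop i))" for i
  have "(\<Sum>i=1..M. success i) \<le> sum f {1..M} + c * Re (mtrace \<sigma>)"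
    unfolding success_def f_def
  proof (rule sum_mtrace_mult_le_nonneg_proj)
    show "hermitian (apply_left (Ch i) rho)" if "i \<in> {1..M}" for i
      using that assms(4) by (intro hermitian_apply_left rho) (simp add: cptp_def)
  qed (use assms(5,6) in \<open>auto simp: \<sigma>_def c_def intro: psd_kron_mat1 psd_ptrace_A rho\<close>)
  also have "sum f {1..M} \<le> real M * Max (f ` {1..M})"
    using sum_bounded_above[of "{1..M}" f "Max (f ` {1..M})"] by simp
  also have "c * Re (mtrace \<sigma>) = exp (real n * (ln (real d) - \<gamma>))"
    using exp_neg_mult_mult_pow[of d n \<gamma>] assms(1) finite_UNIV_card_ge_0[where 'a='a]
    by (simp add: c_def \<sigma>_def mtrace_kron_mat1 mtrace_ptrace_A rho)
  finally have "(\<Sum>i=1..M. success i) / real M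
      \<le> Max (f ` {1..M}) + exp (real n * (ln (real d) - \<gamma>)) / real M"
    using M by (simp add: divide_simps mult.commute)
  moreover have "(1 / real M) * (\<Sum>i=1..M. 1 - success i) = 1 - (\<Sum>i=1..M. success i) / real M"
    using M by (simp add: sum_subtractf field_simps)
  ultimately show ?thesis
    unfolding success_def f_def c_def \<sigma>_def by linarith
qed

end
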